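(* The category $\mathbb{O}$ is small and has pullbacks.
   Context: Fix a set $Act$ of action labels. An $Act$-labelled poset is $O=(X_O,\preccurlyeq_O,l_O)$ with $\preccurlyeq_O$ a partial order on the set $X_O$ and $l_O\colon X_O\to Act$. A morphism $O\to O'$ is a map $X_O\to X_{O'}$ that preserves order and labels; it is an order-embedding if moreover $\sigma(x)\preccurlyeq_{O'}\sigma(y)$ implies $x\preccurlyeq_O y$. $\mathcal{O}$ is the skeletal category of the category of finite $Act$-labelled posets and their morphisms (one chosen object per isomorphism class), and $\mathbb{O}$ is the subcategory of $\mathcal{O}$ with the same objects whose morphisms are the order-embeddings. *)

theory Defs
  imports "HOL-Library.FuncSet"
begin

text \<open>Finite Act-labelled posets; the set Act of labels is the type 'a.
  Representatives have carriers that are finite sets of natural numbers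
  (every finite labelled poset is isomorphic to one of these).\<close>

record 'a lposet =
  elems :: "nat set"
  ordr  :: "(nat \<times> nat) set"
  labl  :: "nat \<Rightarrow> 'a"

definition lposet :: "'a lposet \<Rightarrow> bool" where
  "lposet X \<longleftrightarrow> finite (elems X) \<and> ordr X \<subseteq> elems X \<times> elems X
     \<and> partial_order_on (elems X) (ordr X)
     \<and> (\<forall>x. x \<notin> elems X \<longrightarrow> labl X x = undefined)"

definition lp_hom :: "'a lposet \<Rightarrow> 'a lposet \<Rightarrow> (nat \<Rightarrow> nat) \<Rightarrow> bool" where
  "lp_hom X P f \<longleftrightarrow> f \<in> elems X \<rightarrow>\<^sub>E elems P
     \<and> (\<forall>x\<in>elems X. \<forall>y\<in>elems X. (x, y) \<in> ordr X \<longrightarrow> (f x, f y) \<in> ordr P)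
     \<and> (\<forall>x\<in>elems X. labl P (f x) = labl X x)"

definition lp_emb :: "'a lposet \<Rightarrow> 'a lposet \<Rightarrow> (nat \<Rightarrow> nat) \<Rightarrow> bool" where
  "lp_emb X P f \<longleftrightarrow> lp_hom X P f
     \<and> (\<forall>x\<in>elems X. \<forall>y\<in>elems X. (f x, f y) \<in> ordr P \<longrightarrow> (x, y) \<in> ordr X)"

definition lp_iso :: "'a lposet \<Rightarrow> 'a lposet \<Rightarrow> bool" where
  "lp_iso X P \<longleftrightarrow> (\<exists>f g. lp_hom X P f \<and> lp_hom P X g
     \<and> (\<forall>x\<in>elems X. g (f x) = x) \<and> (\<forall>y\<in>elems P. f (g y) = y))"

definition skel_rep :: "'a lposet \<Rightarrow> 'a lposet" where
  "skel_rep X = (SOME P. lposet P \<and> lp_iso P X)"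

definition OObj :: "'a lposet set" where
  "OObj = skel_rep ` {X. lposet X}"

type_synonym 'a arr = "'a lposet \<times> 'a lposet \<times> (nat \<Rightarrow> nat)"

definition adom :: "'a arr \<Rightarrow> 'a lposet" where "adom a = fst a"
definition acod :: "'a arr \<Rightarrow> 'a lposet" where "acod a = fst (snd a)"

definition OMor :: "'a arr set" where
  "OMor = {(X, P, f). X \<in> OObj \<and> P \<in> OObj \<and> lp_emb X P f}"

definition acomp :: "'a arr \<Rightarrow> 'a arr \<Rightarrow> 'a arr" where
  "acomp b a = (adom a, acod b, restrict (snd (snd b) \<circ> snd (snd a)) (elems (adom a)))"

definition aid :: "'a lposet \<Rightarrow> 'a arr" where
  "aid X = (X, X, restrict id (elems X))"

definition is_category :: "'o set \<Rightarrow> 'm set \<Rightarrow> ('m \<Rightarrow> 'o) \<Rightarrow> ('m \<Rightarrow> 'o)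
    \<Rightarrow> ('m \<Rightarrow> 'm \<Rightarrow> 'm) \<Rightarrow> ('o \<Rightarrow> 'm) \<Rightarrow> bool" where
  "is_category Ob Mo dm cd cp idt \<longleftrightarrow>
     (\<forall>a\<in>Mo. dm a \<in> Ob \<and> cd a \<in> Ob)
   \<and> (\<forall>X\<in>Ob. idt X \<in> Mo \<and> dm (idt X) = X \<and> cd (idt X) = X)
   \<and> (\<forall>a\<in>Mo. \<forall>b\<in>Mo. cd a = dm b \<longrightarrow>
        cp b a \<in> Mo \<and> dm (cp b a) = dm a \<and> cd (cp b a) = cd b)
   \<and> (\<forall>a\<in>Mo. cp a (idt (dm a)) = a \<and> cp (idt (cd a)) a = a)
   \<and> (\<forall>a\<in>Mo. \<forall>b\<in>Mo. \<forall>c\<in>Mo. cd a = dm b \<longrightarrow> cd b = dm c \<longrightarrow>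
        cp c (cp b a) = cp (cp c b) a)"

definition has_pullbacks :: "'o set \<Rightarrow> 'm set \<Rightarrow> ('m \<Rightarrow> 'o) \<Rightarrow> ('m \<Rightarrow> 'o)
    \<Rightarrow> ('m \<Rightarrow> 'm \<Rightarrow> 'm) \<Rightarrow> bool" where
  "has_pullbacks Ob Mo dm cd cp \<longleftrightarrow>
    (\<forall>f\<in>Mo. \<forall>g\<in>Mo. cd f = cd g \<longrightarrow>
      (\<exists>P\<in>Ob. \<exists>p1\<in>Mo. \<exists>p2\<in>Mo.
         dm p1 = P \<and> dm p2 = P \<and> cd p1 = dm f \<and> cd p2 = dm g
         \<and> cp f p1 = cp g p2
         \<and> (\<forall>Q\<in>Ob. \<forall>q1\<in>Mo. \<forall>q2\<in>Mo.
              dm q1 = Q \<and> dm q2 = Q \<and> cd q1 = dm f \<and> cd q2 = dm g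
              \<and> cp f q1 = cp g q2 \<longrightarrow>
              (\<exists>!u. u \<in> Mo \<and> dm u = Q \<and> cd u = P
                    \<and> cp p1 u = q1 \<and> cp p2 u = q2))))"

end

theory Submission
  imports Defs "HOL-Library.Nat_Bijection"
begin

text \<open>Composites and identities of order-embeddings are order-embeddings, so \<open>OMor\<close> forms a
  category; smallness is built into the encoding, whose objects form a set. For pullbacks, given
  embeddings \<open>\<phi> : X \<rightarrow> Z\<close> and \<open>\<psi> : Y \<rightarrow> Z\<close>, take the fibred product
  \<open>{(x, y). \<phi> x = \<psi> y}\<close> with the componentwise order. Because \<open>\<phi>\<close> and \<open>\<psi>\<close> reflect the order,
  the two components of matched pairs are ordered alike, so both projections are embeddings and
  the pairing of a commuting cone of embeddings is again an embedding. Transporting the fibred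
  product along an isomorphism to its skeletal representative gives the pullback in \<open>OMor\<close>.\<close>

lemma lp_embI:
  assumes "\<And>x. x \<in> elems X \<Longrightarrow> f x \<in> elems P" "f \<in> extensional (elems X)"
    "\<And>x y. x \<in> elems X \<Longrightarrow> y \<in> elems X \<Longrightarrow> (f x, f y) \<in> ordr P \<longleftrightarrow> (x, y) \<in> ordr X"
    "\<And>x. x \<in> elems X \<Longrightarrow> labl P (f x) = labl X x"
  shows "lp_emb X P f"
  using assms unfolding lp_emb_def lp_hom_def by (auto simp: PiE_def)

lemma lp_embD:
  assumes "lp_emb X P f"
  shows "\<And>x. x \<in> elems X \<Longrightarrow> f x \<in> elems P" "f \<in> extensional (elems X)"
    "\<And>x y. x \<in> elems X \<Longrightarrow> y \<in> elems X \<Longrightarrow> (f x, f y) \<in> ordr P \<longleftrightarrow> (x, y) \<in> ordr X"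
    "\<And>x. x \<in> elems X \<Longrightarrow> labl P (f x) = labl X x"
  using assms unfolding lp_emb_def lp_hom_def by (auto simp: PiE_def)

lemma lp_emb_id: "lp_emb X X (restrict id (elems X))"
  by (rule lp_embI) auto

lemma lp_emb_comp:
  assumes f: "lp_emb X Y f" and g: "lp_emb Y Z g"
  shows "lp_emb X Z (restrict (g \<circ> f) (elems X))"
  by (rule lp_embI) (simp_all add: lp_embD[OF f] lp_embD[OF g])

lemma lp_iso_refl: "lp_iso X X"
  unfolding lp_iso_def lp_hom_def by (intro exI[of _ "restrict id (elems X)"]) auto

lemma lp_iso_embs:
  assumes "lp_iso P X"
  obtains h k where "lp_emb P X h" "lp_emb X P k"
    "\<forall>x\<in>elems P. k (h x) = x" "\<forall>y\<in>elems X. h (k y) = y"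
proof -
  obtain h k where hk: "lp_hom P X h" "lp_hom X P k"
    "\<forall>x\<in>elems P. k (h x) = x" "\<forall>y\<in>elems X. h (k y) = y"
    using assms unfolding lp_iso_def by blast
  \<comment> \<open>a bijective homomorphism reflects the order because its inverse preserves it\<close>
  then have "lp_emb P X h" "lp_emb X P k"
    unfolding lp_emb_def lp_hom_def by (metis PiE_mem)+
  with hk that show ?thesis by blast
qed

lemma skel_rep_lposet_iso:
  assumes "lposet X"
  shows "lposet (skel_rep X)" "lp_iso (skel_rep X) X"
  using someI[of "\<lambda>P. lposet P \<and> lp_iso P X" X] assms lp_iso_refl
  unfolding skel_rep_def by auto

lemma OObj_lposet: "X \<in> OObj \<Longrightarrow> lposet X"
  unfolding OObj_def using skel_rep_lposet_iso by auto

lemma lposetD: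
  assumes "lposet X"
  shows "finite (elems X)" "ordr X \<subseteq> elems X \<times> elems X"
    "\<And>x. x \<in> elems X \<Longrightarrow> (x, x) \<in> ordr X"
    "\<And>x y z. (x, y) \<in> ordr X \<Longrightarrow> (y, z) \<in> ordr X \<Longrightarrow> (x, z) \<in> ordr X"
    "\<And>x y. (x, y) \<in> ordr X \<Longrightarrow> (y, x) \<in> ordr X \<Longrightarrow> x = y"
  using assms unfolding lposet_def partial_order_on_def preorder_on_def refl_on_def
    trans_on_def antisym_on_def
  by blast+

lemma adom_triple [simp]: "adom (X, P, f) = X"
  and acod_triple [simp]: "acod (X, P, f) = P"
  by (simp_all add: adom_def acod_def)

lemma acomp_triple [simp]: "acomp (Y, Z, g) (X, Y', f) = (X, Z, restrict (g \<circ> f) (elems X))"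
  by (simp add: acomp_def)

lemma OMor_triple_iff [simp]: "(X, P, f) \<in> OMor \<longleftrightarrow> X \<in> OObj \<and> P \<in> OObj \<and> lp_emb X P f"
  by (simp add: OMor_def)

lemma OMorE:
  assumes "a \<in> OMor"
  obtains X P f where "a = (X, P, f)" "X \<in> OObj" "P \<in> OObj" "lp_emb X P f"
  using assms unfolding OMor_def by blast

lemma restrict_eq_extensional_iff:
  "g \<in> extensional A \<Longrightarrow> restrict f A = g \<longleftrightarrow> (\<forall>x\<in>A. f x = g x)"
  by (auto intro: extensionalityI[OF restrict_extensional])

lemma is_category_OMor: "is_category (OObj :: 'a lposet set) OMor adom acod acomp aid"
  unfolding is_category_def
proof (intro conjI ballI impI)
  fix a :: "'a arr" assume "a \<in> OMor"
  then obtain X P f where a: "a = (X, P, f)" "X \<in> OObj" "P \<in> OObj" "lp_emb X P f"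
    by (rule OMorE)
  show "adom a \<in> OObj" "acod a \<in> OObj" using a by simp_all
  show "acomp a (aid (adom a)) = a" "acomp (aid (acod a)) a = a"
    using lp_embD(1,2)[OF a(4)] by (simp_all add: a aid_def restrict_eq_extensional_iff)
next
  fix X :: "'a lposet" assume "X \<in> OObj"
  then show "aid X \<in> OMor" "adom (aid X) = X" "acod (aid X) = X"
    by (simp_all add: aid_def lp_emb_id)
next
  fix a b :: "'a arr" assume "a \<in> OMor" "b \<in> OMor" "acod a = adom b"
  then show "acomp b a \<in> OMor" "adom (acomp b a) = adom a" "acod (acomp b a) = acod b"
    by (auto elim!: OMorE intro: lp_emb_comp)
next
  fix a b c :: "'a arr" assume "a \<in> OMor" "b \<in> OMor" "acod a = adom b"
  then obtain X Y Z f g where "a = (X, Y, f)" "b = (Y, Z, g)" "lp_emb X Y f"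
    by (auto elim!: OMorE)
  then show "acomp c (acomp b a) = acomp (acomp c b) a"
    using lp_embD(1) by (cases c) (auto simp: restrict_eq_extensional_iff)
qed

definition lp_pullback :: "'a lposet \<Rightarrow> 'a lposet \<Rightarrow> (nat \<Rightarrow> nat) \<Rightarrow> (nat \<Rightarrow> nat) \<Rightarrow> 'a lposet"
  where "lp_pullback X Y \<phi> \<psi> =
   (let C = {(x, y). x \<in> elems X \<and> y \<in> elems Y \<and> \<phi> x = \<psi> y} in
    \<lparr>elems = prod_encode ` C,
     ordr = {(prod_encode p, prod_encode q) | p q. p \<in> C \<and> q \<in> C
              \<and> (fst p, fst q) \<in> ordr X \<and> (snd p, snd q) \<in> ordr Y},
     labl = (\<lambda>n. if n \<in> prod_encode ` C then labl X (fst (prod_decode n)) else undefined)\<rparr>)"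

lemma elems_lp_pullback:
  "n \<in> elems (lp_pullback X Y \<phi> \<psi>) \<longleftrightarrow>
   (\<exists>x y. n = prod_encode (x, y) \<and> x \<in> elems X \<and> y \<in> elems Y \<and> \<phi> x = \<psi> y)"
  by (auto simp: lp_pullback_def Let_def)

lemma prod_encode_in_lp_pullback_iff:
  "prod_encode (x, y) \<in> elems (lp_pullback X Y \<phi> \<psi>) \<longleftrightarrow> x \<in> elems X \<and> y \<in> elems Y \<and> \<phi> x = \<psi> y"
  by (auto simp: lp_pullback_def Let_def)

lemma ordr_lp_pullback:
  "(prod_encode (x, y), prod_encode (x', y')) \<in> ordr (lp_pullback X Y \<phi> \<psi>) \<longleftrightarrow>
   prod_encode (x, y) \<in> elems (lp_pullback X Y \<phi> \<psi>) \<and> prod_encode (x', y') \<in> elems (lp_pullback X Y \<phi> \<psi>)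
   \<and> (x, x') \<in> ordr X \<and> (y, y') \<in> ordr Y"
  by (auto simp: lp_pullback_def Let_def)

lemma ordr_lp_pullback_subset:
  "ordr (lp_pullback X Y \<phi> \<psi>) \<subseteq> elems (lp_pullback X Y \<phi> \<psi>) \<times> elems (lp_pullback X Y \<phi> \<psi>)"
  by (auto simp: lp_pullback_def Let_def)

lemma labl_lp_pullback:
  "prod_encode (x, y) \<in> elems (lp_pullback X Y \<phi> \<psi>) \<Longrightarrow>
   labl (lp_pullback X Y \<phi> \<psi>) (prod_encode (x, y)) = labl X x"
  by (auto simp: lp_pullback_def Let_def)

lemma lposet_lp_pullback:
  assumes X: "lposet X" and Y: "lposet Y"
  shows "lposet (lp_pullback X Y \<phi> \<psi>)"
proof -
  let ?P = "lp_pullback X Y \<phi> \<psi>"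
  have "elems ?P \<subseteq> prod_encode ` (elems X \<times> elems Y)"
    by (auto simp: elems_lp_pullback)
  then have "finite (elems ?P)"
    using lposetD(1)[OF X] lposetD(1)[OF Y] by (meson finite_SigmaI finite_imageI finite_subset)
  moreover have "(n, n) \<in> ordr ?P" if "n \<in> elems ?P" for n
    using that lposetD(3)[OF X] lposetD(3)[OF Y] by (auto simp: elems_lp_pullback ordr_lp_pullback)
  moreover have "(n, k) \<in> ordr ?P" if "(n, m) \<in> ordr ?P" "(m, k) \<in> ordr ?P" for n m k
  proof -
    have "n \<in> elems ?P" "m \<in> elems ?P" "k \<in> elems ?P"
      using that ordr_lp_pullback_subset by blast+
    then obtain x y x' y' x'' y'' where
      e: "n = prod_encode (x, y)" "m = prod_encode (x', y')" "k = prod_encode (x'', y'')"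
      by (meson elems_lp_pullback)
    show ?thesis
      using that lposetD(4)[OF X] lposetD(4)[OF Y] unfolding e ordr_lp_pullback by blast
  qed
  moreover have "n = m" if "(n, m) \<in> ordr ?P" "(m, n) \<in> ordr ?P" for n m
  proof -
    have "n \<in> elems ?P" "m \<in> elems ?P" using that ordr_lp_pullback_subset by blast+
    then obtain x y x' y' where e: "n = prod_encode (x, y)" "m = prod_encode (x', y')"
      by (meson elems_lp_pullback)
    show ?thesis
      using that lposetD(5)[OF X] lposetD(5)[OF Y] unfolding e ordr_lp_pullback by blast
  qed
  moreover have "\<forall>n. n \<notin> elems ?P \<longrightarrow> labl ?P n = undefined"
    by (simp add: lp_pullback_def Let_def)
  ultimately show ?thesis
    unfolding lposet_def partial_order_on_def preorder_on_def refl_on_def trans_on_def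
      antisym_on_def
    using ordr_lp_pullback_subset by blast
qed

lemma lp_emb_matched_ordr_iff:
  assumes "lp_emb X Z \<phi>" "lp_emb Y Z \<psi>"
    and "x \<in> elems X" "x' \<in> elems X" "y \<in> elems Y" "y' \<in> elems Y"
    and "\<phi> x = \<psi> y" "\<phi> x' = \<psi> y'"
  shows "(x, x') \<in> ordr X \<longleftrightarrow> (y, y') \<in> ordr Y"
  using assms lp_embD(3)[OF assms(1)] lp_embD(3)[OF assms(2)] by metis

definition lp_pb_fst :: "'a lposet \<Rightarrow> 'a lposet \<Rightarrow> (nat \<Rightarrow> nat) \<Rightarrow> (nat \<Rightarrow> nat) \<Rightarrow> nat \<Rightarrow> nat"
  where "lp_pb_fst X Y \<phi> \<psi> = restrict (fst \<circ> prod_decode) (elems (lp_pullback X Y \<phi> \<psi>))"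

definition lp_pb_snd :: "'a lposet \<Rightarrow> 'a lposet \<Rightarrow> (nat \<Rightarrow> nat) \<Rightarrow> (nat \<Rightarrow> nat) \<Rightarrow> nat \<Rightarrow> nat"
  where "lp_pb_snd X Y \<phi> \<psi> = restrict (snd \<circ> prod_decode) (elems (lp_pullback X Y \<phi> \<psi>))"

lemma lp_pb_fst_snd_prod_encode [simp]:
  assumes "prod_encode (x, y) \<in> elems (lp_pullback X Y \<phi> \<psi>)"
  shows "lp_pb_fst X Y \<phi> \<psi> (prod_encode (x, y)) = x"
    "lp_pb_snd X Y \<phi> \<psi> (prod_encode (x, y)) = y"
  using assms by (simp_all add: lp_pb_fst_def lp_pb_snd_def)

lemma lp_pullback_elem_eq:
  "n \<in> elems (lp_pullback X Y \<phi> \<psi>) \<Longrightarrow>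
   n = prod_encode (lp_pb_fst X Y \<phi> \<psi> n, lp_pb_snd X Y \<phi> \<psi> n)"
  by (auto simp: elems_lp_pullback)

lemma lp_emb_lp_pb_fst:
  assumes \<phi>: "lp_emb X Z \<phi>" and \<psi>: "lp_emb Y Z \<psi>"
  shows "lp_emb (lp_pullback X Y \<phi> \<psi>) X (lp_pb_fst X Y \<phi> \<psi>)"
proof (rule lp_embI)
  fix n m assume "n \<in> elems (lp_pullback X Y \<phi> \<psi>)" "m \<in> elems (lp_pullback X Y \<phi> \<psi>)"
  then show "(lp_pb_fst X Y \<phi> \<psi> n, lp_pb_fst X Y \<phi> \<psi> m) \<in> ordr X \<longleftrightarrow> (n, m) \<in> ordr (lp_pullback X Y \<phi> \<psi>)"
    using lp_emb_matched_ordr_iff[OF \<phi> \<psi>]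
    by (auto simp: elems_lp_pullback ordr_lp_pullback prod_encode_in_lp_pullback_iff)
qed (auto simp: elems_lp_pullback labl_lp_pullback lp_pb_fst_def)

lemma lp_emb_lp_pb_snd:
  assumes \<phi>: "lp_emb X Z \<phi>" and \<psi>: "lp_emb Y Z \<psi>"
  shows "lp_emb (lp_pullback X Y \<phi> \<psi>) Y (lp_pb_snd X Y \<phi> \<psi>)"
proof (rule lp_embI)
  fix n m assume "n \<in> elems (lp_pullback X Y \<phi> \<psi>)" "m \<in> elems (lp_pullback X Y \<phi> \<psi>)"
  then show "(lp_pb_snd X Y \<phi> \<psi> n, lp_pb_snd X Y \<phi> \<psi> m) \<in> ordr Y \<longleftrightarrow> (n, m) \<in> ordr (lp_pullback X Y \<phi> \<psi>)"
    using lp_emb_matched_ordr_iff[OF \<phi> \<psi>]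
    by (auto simp: elems_lp_pullback ordr_lp_pullback prod_encode_in_lp_pullback_iff)
next
  fix n assume "n \<in> elems (lp_pullback X Y \<phi> \<psi>)"
  then show "labl Y (lp_pb_snd X Y \<phi> \<psi> n) = labl (lp_pullback X Y \<phi> \<psi>) n"
    using lp_embD(4)[OF \<phi>] lp_embD(4)[OF \<psi>] by (auto simp: elems_lp_pullback labl_lp_pullback) metis
qed (auto simp: elems_lp_pullback lp_pb_snd_def)

lemma lp_emb_pairing:
  assumes \<alpha>: "lp_emb Q X \<alpha>" and \<beta>: "lp_emb Q Y \<beta>"
    and comm: "\<forall>z\<in>elems Q. \<phi> (\<alpha> z) = \<psi> (\<beta> z)"
  shows "lp_emb Q (lp_pullback X Y \<phi> \<psi>) (\<lambda>z\<in>elems Q. prod_encode (\<alpha> z, \<beta> z))"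
  by (rule lp_embI)
    (auto simp: prod_encode_in_lp_pullback_iff ordr_lp_pullback labl_lp_pullback comm
      lp_embD[OF \<alpha>] lp_embD[OF \<beta>])

lemma lp_pullback_universal:
  assumes \<phi>: "lp_emb X Z \<phi>" and \<psi>: "lp_emb Y Z \<psi>"
    and h: "lp_emb P (lp_pullback X Y \<phi> \<psi>) h" and k: "lp_emb (lp_pullback X Y \<phi> \<psi>) P k"
    and kh: "\<forall>x\<in>elems P. k (h x) = x" and hk: "\<forall>y\<in>elems (lp_pullback X Y \<phi> \<psi>). h (k y) = y"
    and \<alpha>: "lp_emb Q X \<alpha>" and \<beta>: "lp_emb Q Y \<beta>"
    and comm: "\<forall>z\<in>elems Q. \<phi> (\<alpha> z) = \<psi> (\<beta> z)"
  shows "\<exists>!w. lp_emb Q P w \<and>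
    (\<forall>z\<in>elems Q. lp_pb_fst X Y \<phi> \<psi> (h (w z)) = \<alpha> z \<and> lp_pb_snd X Y \<phi> \<psi> (h (w z)) = \<beta> z)"
proof
  define \<sigma> where "\<sigma> = (\<lambda>z\<in>elems Q. prod_encode (\<alpha> z, \<beta> z))"
  have \<sigma>: "lp_emb Q (lp_pullback X Y \<phi> \<psi>) \<sigma>"
    unfolding \<sigma>_def using \<alpha> \<beta> comm by (rule lp_emb_pairing)
  have \<sigma>_in: "\<sigma> z \<in> elems (lp_pullback X Y \<phi> \<psi>)" if "z \<in> elems Q" for z
    using lp_embD(1)[OF \<sigma> that] .
  show "lp_emb Q P (restrict (k \<circ> \<sigma>) (elems Q)) \<and>
    (\<forall>z\<in>elems Q. lp_pb_fst X Y \<phi> \<psi> (h (restrict (k \<circ> \<sigma>) (elems Q) z)) = \<alpha> z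
      \<and> lp_pb_snd X Y \<phi> \<psi> (h (restrict (k \<circ> \<sigma>) (elems Q) z)) = \<beta> z)"
    using lp_emb_comp[OF \<sigma> k] hk \<sigma>_in by (auto simp: \<sigma>_def)
  fix w assume w: "lp_emb Q P w \<and>
    (\<forall>z\<in>elems Q. lp_pb_fst X Y \<phi> \<psi> (h (w z)) = \<alpha> z \<and> lp_pb_snd X Y \<phi> \<psi> (h (w z)) = \<beta> z)"
  show "w = restrict (k \<circ> \<sigma>) (elems Q)"
  proof (rule extensionalityI[OF lp_embD(2) restrict_extensional])
    show "lp_emb Q P w" using w ..
    fix z assume z: "z \<in> elems Q"
    have "w z \<in> elems P" using lp_embD(1) w z by blast
    moreover have "h (w z) = \<sigma> z"
      using lp_pullback_elem_eq[OF lp_embD(1)[OF h \<open>w z \<in> elems P\<close>]] w z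
      by (simp add: \<sigma>_def)
    ultimately show "w z = restrict (k \<circ> \<sigma>) (elems Q) z"
      using kh z by (metis comp_apply restrict_apply')
  qed
qed

lemma OMor_pullback_universal:
  assumes \<phi>: "lp_emb X Z \<phi>" and \<psi>: "lp_emb Y Z \<psi>"
    and h: "lp_emb P (lp_pullback X Y \<phi> \<psi>) h" and k: "lp_emb (lp_pullback X Y \<phi> \<psi>) P k"
    and kh: "\<forall>x\<in>elems P. k (h x) = x" and hk: "\<forall>y\<in>elems (lp_pullback X Y \<phi> \<psi>). h (k y) = y"
    and P: "P \<in> OObj" and Q: "Q \<in> OObj" and q: "(Q, X, \<alpha>) \<in> OMor" "(Q, Y, \<beta>) \<in> OMor"
    and square: "acomp (X, Z, \<phi>) (Q, X, \<alpha>) = acomp (Y, Z, \<psi>) (Q, Y, \<beta>)"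
  shows "\<exists>!u. u \<in> OMor \<and> adom u = Q \<and> acod u = P
    \<and> acomp (P, X, restrict (lp_pb_fst X Y \<phi> \<psi> \<circ> h) (elems P)) u = (Q, X, \<alpha>)
    \<and> acomp (P, Y, restrict (lp_pb_snd X Y \<phi> \<psi> \<circ> h) (elems P)) u = (Q, Y, \<beta>)"
proof -
  have \<alpha>: "lp_emb Q X \<alpha>" and \<beta>: "lp_emb Q Y \<beta>" using q by simp_all
  have "restrict (\<phi> \<circ> \<alpha>) (elems Q) = restrict (\<psi> \<circ> \<beta>) (elems Q)"
    using square by simp
  then have comm: "\<forall>z\<in>elems Q. \<phi> (\<alpha> z) = \<psi> (\<beta> z)"
    by (metis comp_apply restrict_apply')
  have factors: "u \<in> OMor \<and> adom u = Q \<and> acod u = P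
    \<and> acomp (P, X, restrict (lp_pb_fst X Y \<phi> \<psi> \<circ> h) (elems P)) u = (Q, X, \<alpha>)
    \<and> acomp (P, Y, restrict (lp_pb_snd X Y \<phi> \<psi> \<circ> h) (elems P)) u = (Q, Y, \<beta>)
    \<longleftrightarrow> (\<exists>w. u = (Q, P, w) \<and> lp_emb Q P w \<and>
          (\<forall>z\<in>elems Q. lp_pb_fst X Y \<phi> \<psi> (h (w z)) = \<alpha> z \<and> lp_pb_snd X Y \<phi> \<psi> (h (w z)) = \<beta> z))"
    for u
    using P Q lp_embD(1,2)[OF \<alpha>] lp_embD(1,2)[OF \<beta>]
    by (cases u) (auto simp: restrict_eq_extensional_iff dest: lp_embD(1))
  show ?thesis
    unfolding factors using lp_pullback_universal[OF \<phi> \<psi> h k kh hk \<alpha> \<beta> comm] by blast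
qed

lemma has_pullbacks_OMor: "has_pullbacks (OObj :: 'a lposet set) OMor adom acod acomp"
  unfolding has_pullbacks_def
proof (intro ballI impI)
  fix f g :: "'a arr" assume "f \<in> OMor" "g \<in> OMor" "acod f = acod g"
  then obtain X Y Z \<phi> \<psi> where f: "f = (X, Z, \<phi>)" and g: "g = (Y, Z, \<psi>)"
    and XY: "X \<in> OObj" "Y \<in> OObj" and \<phi>: "lp_emb X Z \<phi>" and \<psi>: "lp_emb Y Z \<psi>"
    by (elim OMorE) auto
  let ?F = "lp_pullback X Y \<phi> \<psi>" and ?fst = "lp_pb_fst X Y \<phi> \<psi>" and ?snd = "lp_pb_snd X Y \<phi> \<psi>"
  have F: "lposet ?F" using XY by (intro lposet_lp_pullback OObj_lposet)
  define P where "P = skel_rep ?F"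
  have P: "P \<in> OObj" unfolding P_def OObj_def using F by blast
  obtain h k where h: "lp_emb P ?F h" and k: "lp_emb ?F P k"
    and kh: "\<forall>x\<in>elems P. k (h x) = x" and hk: "\<forall>y\<in>elems ?F. h (k y) = y"
    using lp_iso_embs[OF skel_rep_lposet_iso(2)[OF F]] unfolding P_def by blast
  define p1 where "p1 = (P, X, restrict (?fst \<circ> h) (elems P))"
  define p2 where "p2 = (P, Y, restrict (?snd \<circ> h) (elems P))"
  have p: "p1 \<in> OMor" "p2 \<in> OMor"
    using P XY lp_emb_comp[OF h lp_emb_lp_pb_fst[OF \<phi> \<psi>]]
      lp_emb_comp[OF h lp_emb_lp_pb_snd[OF \<phi> \<psi>]]
    by (simp_all add: p1_def p2_def)
  have "\<phi> (?fst (h z)) = \<psi> (?snd (h z))" if "z \<in> elems P" for z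
    using lp_embD(1)[OF h that] by (auto simp: elems_lp_pullback)
  then have square: "acomp f p1 = acomp g p2"
    by (simp add: f g p1_def p2_def cong: restrict_cong)
  have universal: "\<exists>!u. u \<in> OMor \<and> adom u = Q \<and> acod u = P \<and> acomp p1 u = q1 \<and> acomp p2 u = q2"
    if "Q \<in> OObj" "q1 \<in> OMor" "q2 \<in> OMor" "adom q1 = Q" "adom q2 = Q"
      "acod q1 = adom f" "acod q2 = adom g" "acomp f q1 = acomp g q2" for Q q1 q2
    using that OMor_pullback_universal[OF \<phi> \<psi> h k kh hk P]
    by (cases q1, cases q2) (simp add: f g p1_def p2_def)
  have dom: "adom p1 = P" "adom p2 = P" "acod p1 = adom f" "acod p2 = adom g"
    by (simp_all add: p1_def p2_def f g)
  show "\<exists>P\<in>OObj. \<exists>p1\<in>OMor. \<exists>p2\<in>OMor.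
         adom p1 = P \<and> adom p2 = P \<and> acod p1 = adom f \<and> acod p2 = adom g
         \<and> acomp f p1 = acomp g p2
         \<and> (\<forall>Q\<in>OObj. \<forall>q1\<in>OMor. \<forall>q2\<in>OMor.
              adom q1 = Q \<and> adom q2 = Q \<and> acod q1 = adom f \<and> acod q2 = adom g
              \<and> acomp f q1 = acomp g q2 \<longrightarrow>
              (\<exists>!u. u \<in> OMor \<and> adom u = Q \<and> acod u = P
                    \<and> acomp p1 u = q1 \<and> acomp p2 u = q2))"
    by (rule bexI[OF _ P], rule bexI[OF _ p(1)], rule bexI[OF _ p(2)])
      (simp add: dom square universal)
qed

theorem proposition6:
  shows "is_category (OObj :: 'a lposet set) OMor adom acod acomp aid
       \<and> has_pullbacks (OObj :: 'a lposet set) OMor adom acod acomp"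
  using is_category_OMor has_pullbacks_OMor by blast

end
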